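(* Let $p$ be a prime and $G$ a finite metacyclic $p$-group. Then every non-abelian subgroup $H$ of $G$ satisfies $C_G(H)\le H$.
   Context: A group is metacyclic if it has a cyclic normal subgroup with cyclic quotient. $C_G(H)$ denotes the centralizer of $H$ in $G$. *)

theory Defs
  imports "HOL-Algebra.Algebra"
begin

definition centralizer :: "('a, 'b) monoid_scheme \<Rightarrow> 'a set \<Rightarrow> 'a set" where
  "centralizer G H = {g \<in> carrier G. \<forall>h \<in> H. g \<otimes>\<^bsub>G\<^esub> h = h \<otimes>\<^bsub>G\<^esub> g}"

definition metacyclic :: "('a, 'b) monoid_scheme \<Rightarrow> bool" where
  "metacyclic G \<longleftrightarrow> (\<exists>N. N \<lhd> G \<and> cyclic_group (G\<lparr>carrier := N\<rparr>) \<and> cyclic_group (G Mod N))"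

end

theory Submission
  imports Defs
begin

text \<open>
  Let \<open>N\<close> be a cyclic normal subgroup with \<open>G/N\<close> cyclic. Both are cyclic \<open>p\<close>-groups, so any
  two elements of \<open>N\<close>, and any two cosets of \<open>N\<close>, are comparable: one is a power of the other.
  Hence \<open>H\<close> contains an element \<open>b\<close> whose coset generates \<open>HN/N\<close>, and \<open>H = (N \<inter> H)\<langle>b\<rangle>\<close>.
  Let \<open>x \<notin> H\<close> centralize \<open>H\<close>. If \<open>xN\<close> is a power of \<open>bN\<close>, write \<open>x = n b\<^sup>k\<close> with \<open>n \<in> N\<close>; then
  \<open>n \<notin> H\<close>, so every element of \<open>N \<inter> H\<close> is a power of \<open>n\<close>, and \<open>H \<subseteq> \<langle>n, b\<rangle>\<close> is abelian.
  Otherwise \<open>b = n x\<^sup>k\<close> with \<open>n \<in> N\<close>, and \<open>H \<subseteq> \<langle>N \<inter> H, n, x\<rangle>\<close>, which is abelian because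
  \<open>N\<close> is abelian and \<open>x\<close> commutes with \<open>H\<close> and with \<open>n\<close>. Either way \<open>H\<close> would be abelian.
\<close>

lemma gcd_int_prime_power:
  assumes "Factorial_Ring.prime p"
  shows "\<exists>a. gcd i (int p ^ n) = int p ^ a"
proof -
  have "Factorial_Ring.prime (int p)" using assms by simp
  moreover have "gcd i (int p ^ n) dvd int p ^ n" by simp
  ultimately obtain a where "normalize (gcd i (int p ^ n)) = int p ^ a"
    using divides_primepow by blast
  then show ?thesis by auto
qed

lemma (in group) int_pow_in_powers_if_gcd_dvd:
  fixes i j m :: int
  assumes g: "g \<in> carrier G" and gm: "g [^] m = \<one>" and "gcd j m dvd i"
  shows "\<exists>k::int. g [^] i = (g [^] j) [^] k"
proof -
  obtain s t where st: "s * j + t * m = gcd j m" using bezout_int by blast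
  obtain q where "i = gcd j m * q" using assms(3) by blast
  then have "i = j * (s * q) + m * (t * q)" by (simp flip: st add: algebra_simps)
  then have "g [^] i = (g [^] j) [^] (s * q) \<otimes> (g [^] m) [^] (t * q)"
    using g by (simp add: int_pow_mult int_pow_pow)
  then show ?thesis using g gm by auto
qed

lemma (in group) cyclic_prime_power_powers_chain:
  assumes "cyclic_group G" "Factorial_Ring.prime p" "order G = p ^ n"
    and "u \<in> carrier G" "v \<in> carrier G"
  shows "(\<exists>k::int. u = v [^] k) \<or> (\<exists>k::int. v = u [^] k)"
proof -
  obtain g where g: "g \<in> carrier G" and gen: "carrier G = range (\<lambda>i::int. g [^] i)"
    using assms(1) cyclic_group by blast
  define m where "m = int p ^ n"
  have gm: "g [^] m = \<one>"
    using pow_order_eq_1[OF g] assms(3) by (metis int_pow_int m_def of_nat_power)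
  obtain i j :: int where u: "u = g [^] i" and v: "v = g [^] j"
    using assms(4,5) gen by blast
  obtain a b where "gcd i m = int p ^ a" "gcd j m = int p ^ b"
    using gcd_int_prime_power[OF assms(2)] m_def by metis
  then have "gcd i m dvd gcd j m \<or> gcd j m dvd gcd i m"
    by (metis le_imp_power_dvd nat_le_linear)
  then show ?thesis
    using int_pow_in_powers_if_gcd_dvd[OF g gm] u v by (meson dvd_trans gcd_dvd1)
qed

lemma (in group) metacyclic_prime_power_structure:
  assumes "Factorial_Ring.prime p" "order G = p ^ n" "metacyclic G"
  obtains N where "N \<lhd> G"
    and "\<And>u v. u \<in> N \<Longrightarrow> v \<in> N \<Longrightarrow> u \<otimes> v = v \<otimes> u"
    and "\<And>u v. u \<in> N \<Longrightarrow> v \<in> N \<Longrightarrow> (\<exists>k::int. u = v [^] k) \<or> (\<exists>k::int. v = u [^] k)"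
    and "\<And>u v. u \<in> carrier G \<Longrightarrow> v \<in> carrier G \<Longrightarrow>
           (\<exists>k::int. N #> u = N #> v [^] k) \<or> (\<exists>k::int. N #> v = N #> u [^] k)"
proof -
  obtain N where N: "N \<lhd> G" and cN: "cyclic_group (G\<lparr>carrier := N\<rparr>)"
    and cQ: "cyclic_group (G Mod N)"
    using assms(3) unfolding metacyclic_def by blast
  interpret N: normal N G by (fact N)
  have gN: "group (G\<lparr>carrier := N\<rparr>)" by (rule subgroup_imp_group[OF N.subgroup_axioms])
  have lag: "card (rcosets N) * card N = p ^ n"
    using lagrange[OF N.subgroup_axioms] assms(2) by simp
  obtain a where oN: "order (G\<lparr>carrier := N\<rparr>) = p ^ a"
  proof -
    have "card N dvd p ^ n" using lag by (metis dvd_triv_right)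
    then show ?thesis using divides_primepow_nat[OF assms(1)] that by (auto simp: order_def)
  qed
  obtain c where oQ: "order (G Mod N) = p ^ c"
  proof -
    have "card (rcosets N) dvd p ^ n" using lag by (metis dvd_triv_left)
    then show ?thesis using divides_primepow_nat[OF assms(1)] that
      by (auto simp: order_def FactGroup_def)
  qed
  show ?thesis
  proof
    show "u \<otimes> v = v \<otimes> u" if "u \<in> N" "v \<in> N" for u v
      using comm_groupE(4)[OF group.cyclic_imp_abelian_group[OF gN cN]] that by simp
    show "(\<exists>k::int. u = v [^] k) \<or> (\<exists>k::int. v = u [^] k)" if "u \<in> N" "v \<in> N" for u v
      using group.cyclic_prime_power_powers_chain[OF gN cN assms(1) oN] that
        int_pow_consistent[OF N.subgroup_axioms] by simp
    show "(\<exists>k::int. N #> u = N #> v [^] k) \<or> (\<exists>k::int. N #> v = N #> u [^] k)"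
      if "u \<in> carrier G" "v \<in> carrier G" for u v
    proof -
      have "N #> u \<in> carrier (G Mod N)" "N #> v \<in> carrier (G Mod N)"
        using that rcosetsI[OF N.subset] by (simp_all add: FactGroup_def)
      from group.cyclic_prime_power_powers_chain[OF N.factorgroup_is_group cQ assms(1) oQ this]
      show ?thesis by (simp add: N.FactGroup_int_pow that)
    qed
  qed (fact N)
qed

lemma finite_total_preorder_has_greatest:
  assumes "finite A" "A \<noteq> {}"
    and "\<forall>x\<in>A. \<forall>y\<in>A. \<forall>z\<in>A. R x y \<longrightarrow> R y z \<longrightarrow> R x z"
    and "\<forall>x\<in>A. \<forall>y\<in>A. R x y \<or> R y x"
  shows "\<exists>b\<in>A. \<forall>x\<in>A. R x b"
  using assms
proof (induction A rule: finite_ne_induct)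
  case (singleton x)
  then show ?case by blast
next
  case (insert a F)
  then obtain b where "b \<in> F" "\<forall>x\<in>F. R x b" by (metis insert_iff)
  with insert.prems show ?case by (metis insert_iff)
qed

lemma (in group) exists_coset_power_generator:
  assumes N: "N \<lhd> G" and "finite H" "H \<noteq> {}" "H \<subseteq> carrier G"
    and chain: "\<And>u v. u \<in> H \<Longrightarrow> v \<in> H \<Longrightarrow>
           (\<exists>k::int. N #> u = N #> v [^] k) \<or> (\<exists>k::int. N #> v = N #> u [^] k)"
  shows "\<exists>b\<in>H. \<forall>h\<in>H. \<exists>k::int. N #> h = N #> b [^] k"
proof -
  interpret N: normal N G by (fact N)
  define R where "R u v \<longleftrightarrow> (\<exists>k::int. N #> u = N #> v [^] k)" for u v
  have "R u w" if uvw: "u \<in> H" "v \<in> H" "w \<in> H" and "R u v" "R v w" for u v w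
  proof -
    obtain k l :: int where k: "N #> u = N #> v [^] k" and l: "N #> v = N #> w [^] l"
      using \<open>R u v\<close> \<open>R v w\<close> unfolding R_def by blast
    have "v \<in> carrier G" "w \<in> carrier G" using uvw assms(4) by auto
    then have "N #> v [^] k = N #> (w [^] l) [^] k"
      using l by (simp flip: N.FactGroup_int_pow)
    then show ?thesis
      using k \<open>w \<in> carrier G\<close> unfolding R_def by (metis int_pow_pow)
  qed
  then show ?thesis
    using finite_total_preorder_has_greatest[of H R] assms(2,3) chain
    unfolding R_def by blast
qed

lemma (in group) centralizer_subgroup:
  assumes "S \<subseteq> carrier G"
  shows "subgroup (centralizer G S) G"
proof (rule subgroupI)
  show "centralizer G S \<subseteq> carrier G" "centralizer G S \<noteq> {}"
    using assms one_closed by (force simp: centralizer_def)+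
next
  fix a b assume a: "a \<in> centralizer G S" and b: "b \<in> centralizer G S"
  then have aG: "a \<in> carrier G" and bG: "b \<in> carrier G" by (simp_all add: centralizer_def)
  have "inv a \<otimes> s = s \<otimes> inv a" if s: "s \<in> S" for s
  proof -
    have sG: "s \<in> carrier G" using s assms by auto
    have "inv a \<otimes> s = inv a \<otimes> (s \<otimes> a) \<otimes> inv a"
      using aG sG by (simp add: m_assoc)
    also have "\<dots> = inv a \<otimes> (a \<otimes> s) \<otimes> inv a"
      using a s by (simp add: centralizer_def)
    also have "\<dots> = s \<otimes> inv a"
      using aG sG by (simp flip: m_assoc)
    finally show ?thesis .
  qed
  then show "inv a \<in> centralizer G S" using aG by (simp add: centralizer_def)
  have "a \<otimes> b \<otimes> s = s \<otimes> (a \<otimes> b)" if s: "s \<in> S" for s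
  proof -
    have sG: "s \<in> carrier G" using s assms by auto
    have "a \<otimes> b \<otimes> s = a \<otimes> (s \<otimes> b)" using b s aG bG sG by (simp add: centralizer_def m_assoc)
    also have "\<dots> = s \<otimes> (a \<otimes> b)"
      using a s aG bG sG by (simp add: centralizer_def flip: m_assoc)
    finally show ?thesis .
  qed
  then show "a \<otimes> b \<in> centralizer G S" using aG bG by (simp add: centralizer_def)
qed

lemma (in group) generate_commuting_commute:
  assumes S: "S \<subseteq> carrier G" and comm: "\<And>s t. s \<in> S \<Longrightarrow> t \<in> S \<Longrightarrow> s \<otimes> t = t \<otimes> s"
    and "x \<in> generate G S" "y \<in> generate G S"
  shows "x \<otimes> y = y \<otimes> x"
proof -
  have "S \<subseteq> centralizer G S" using S comm by (auto simp: centralizer_def)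
  from generate_subgroup_incl[OF this centralizer_subgroup[OF S]]
  have "S \<subseteq> centralizer G (generate G S)"
    using S by (auto simp: centralizer_def)
  from generate_subgroup_incl[OF this centralizer_subgroup[OF subgroup.subset[OF generate_is_subgroup[OF S]]]]
  show ?thesis using assms(3,4) by (auto simp: centralizer_def)
qed

lemma (in group) rcos_eq_imp_mult_inv_mem:
  assumes "subgroup N G" "x \<in> carrier G" "y \<in> carrier G" "N #> x = N #> y"
  shows "x \<otimes> inv y \<in> N"
proof -
  have "N #> (x \<otimes> inv y) = N"
    using coset_mult_inv2[OF assms(4,2,3) subgroup.subset[OF assms(1)]] .
  then show ?thesis using coset_join1 assms by simp
qed

lemma (in group) commute_mult_inv_int_pow:
  assumes "x \<in> carrier G" "y \<in> carrier G" "x \<otimes> y = y \<otimes> x"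
  shows "x \<otimes> inv (y [^] (k::int)) \<otimes> y = y \<otimes> (x \<otimes> inv (y [^] k))"
proof -
  have sub: "subgroup (centralizer G {y}) G" using centralizer_subgroup assms(2) by simp
  have "x \<in> centralizer G {y}" "y \<in> centralizer G {y}"
    using assms by (simp_all add: centralizer_def)
  then have "x \<otimes> inv (y [^] k) \<in> centralizer G {y}"
    using sub by (simp add: subgroup.m_closed subgroup.m_inv_closed subgroup_int_pow_closed)
  then show ?thesis by (simp add: centralizer_def)
qed

lemma (in group) comm_group_if_generate_contains_coset_powers:
  assumes N: "subgroup N G" and H: "subgroup H G" and S: "S \<subseteq> carrier G"
    and comm: "\<And>s t. s \<in> S \<Longrightarrow> t \<in> S \<Longrightarrow> s \<otimes> t = t \<otimes> s"
    and b: "b \<in> H" "b \<in> generate G S" and NH: "N \<inter> H \<subseteq> generate G S"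
    and powers: "\<forall>h\<in>H. \<exists>k::int. N #> h = N #> b [^] k"
  shows "comm_group (G\<lparr>carrier := H\<rparr>)"
proof -
  have gen: "subgroup (generate G S) G" by (rule generate_is_subgroup[OF S])
  have "h \<in> generate G S" if h: "h \<in> H" for h
  proof -
    obtain k :: int where k: "N #> h = N #> b [^] k" using powers h by blast
    have hG: "h \<in> carrier G" and bG: "b \<in> carrier G"
      using h b(1) subgroup.mem_carrier[OF H] by auto
    have "h \<otimes> inv (b [^] k) \<in> N"
      using rcos_eq_imp_mult_inv_mem[OF N hG _ k] bG by simp
    moreover have "h \<otimes> inv (b [^] k) \<in> H"
      using h b(1) H by (simp add: subgroup.m_closed subgroup.m_inv_closed subgroup_int_pow_closed)
    ultimately have "h \<otimes> inv (b [^] k) \<otimes> b [^] k \<in> generate G S"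
      using NH subgroup.m_closed[OF gen] subgroup_int_pow_closed[OF gen b(2)] by blast
    then show ?thesis using hG bG by (simp add: m_assoc)
  qed
  then show ?thesis
    using group.group_comm_groupI[OF subgroup_imp_group[OF H]]
      generate_commuting_commute[OF S comm] by auto
qed

lemma (in group) comm_group_if_centralizer_coset_in_generator_powers:
  assumes N: "subgroup N G"
    and chainN: "\<And>u v. u \<in> N \<Longrightarrow> v \<in> N \<Longrightarrow> (\<exists>k::int. u = v [^] k) \<or> (\<exists>k::int. v = u [^] k)"
    and H: "subgroup H G" and b: "b \<in> H" and powers: "\<forall>h\<in>H. \<exists>k::int. N #> h = N #> b [^] k"
    and x: "x \<in> centralizer G H" "x \<notin> H" and xb: "N #> x = N #> b [^] (k::int)"
  shows "comm_group (G\<lparr>carrier := H\<rparr>)"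
proof -
  have xG: "x \<in> carrier G" and bG: "b \<in> carrier G"
    using x(1) b subgroup.mem_carrier[OF H] by (auto simp: centralizer_def)
  define n where "n = x \<otimes> inv (b [^] k)"
  have nN: "n \<in> N"
    using rcos_eq_imp_mult_inv_mem[OF N xG _ xb] bG by (simp add: n_def)
  have nG: "n \<in> carrier G" using nN subgroup.mem_carrier[OF N] by blast
  have nb: "n \<otimes> b = b \<otimes> n"
    using commute_mult_inv_int_pow[OF xG bG] x(1) b by (simp add: n_def centralizer_def)
  have "n \<notin> H"
  proof
    assume "n \<in> H"
    then have "n \<otimes> b [^] k \<in> H"
      using b H by (simp add: subgroup.m_closed subgroup_int_pow_closed)
    moreover have "n \<otimes> b [^] k = x" using xG bG by (simp add: n_def m_assoc)
    ultimately show False using x(2) by simp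
  qed
  have S: "{n, b} \<subseteq> carrier G" using nG bG by simp
  have gen: "subgroup (generate G {n, b}) G" by (rule generate_is_subgroup[OF S])
  have n_gen: "n \<in> generate G {n, b}" and b_gen: "b \<in> generate G {n, b}"
    by (simp_all add: generate.incl)
  \<comment> \<open>an element of \<open>N \<inter> H\<close> lying above \<open>n\<close> in the chain would put \<open>n\<close> into \<open>H\<close>\<close>
  have "N \<inter> H \<subseteq> generate G {n, b}"
  proof
    fix a assume a: "a \<in> N \<inter> H"
    have "\<not> (\<exists>j::int. n = a [^] j)"
      using a \<open>n \<notin> H\<close> H subgroup_int_pow_closed by blast
    then obtain j :: int where "a = n [^] j" using chainN[OF _ nN] a by blast
    then show "a \<in> generate G {n, b}" using subgroup_int_pow_closed[OF gen n_gen] by simp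
  qed
  moreover have "s \<otimes> t = t \<otimes> s" if "s \<in> {n, b}" "t \<in> {n, b}" for s t
    using that nb by auto
  ultimately show ?thesis
    using comm_group_if_generate_contains_coset_powers[OF N H S _ b b_gen _ powers] by blast
qed

lemma (in group) comm_group_if_generator_coset_in_centralizer_powers:
  assumes N: "subgroup N G" and commN: "\<And>u v. u \<in> N \<Longrightarrow> v \<in> N \<Longrightarrow> u \<otimes> v = v \<otimes> u"
    and H: "subgroup H G" and b: "b \<in> H" and powers: "\<forall>h\<in>H. \<exists>k::int. N #> h = N #> b [^] k"
    and x: "x \<in> centralizer G H" and bx: "N #> b = N #> x [^] (k::int)"
  shows "comm_group (G\<lparr>carrier := H\<rparr>)"
proof -
  have xG: "x \<in> carrier G" and bG: "b \<in> carrier G"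
    using x b subgroup.mem_carrier[OF H] by (auto simp: centralizer_def)
  have x_comm: "h \<otimes> x = x \<otimes> h" if "h \<in> H" for h
    using x that by (simp add: centralizer_def)
  define n where "n = b \<otimes> inv (x [^] k)"
  have nN: "n \<in> N"
    using rcos_eq_imp_mult_inv_mem[OF N bG _ bx] xG by (simp add: n_def)
  have nx: "n \<otimes> x = x \<otimes> n"
    using commute_mult_inv_int_pow[OF bG xG] x_comm[OF b] by (simp add: n_def)
  define S where "S = (N \<inter> H) \<union> {n, x}"
  have S: "S \<subseteq> carrier G" using nN xG subgroup.subset[OF N] by (auto simp: S_def)
  have comm: "s \<otimes> t = t \<otimes> s" if "s \<in> S" "t \<in> S" for s t
    using that nN nx x_comm commN by (auto simp: S_def)
  have gen: "subgroup (generate G S) G" by (rule generate_is_subgroup[OF S])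
  have "n \<in> generate G S" "x \<in> generate G S" by (simp_all add: S_def generate.incl)
  then have "n \<otimes> x [^] k \<in> generate G S"
    using subgroup.m_closed[OF gen] subgroup_int_pow_closed[OF gen] by blast
  moreover have "n \<otimes> x [^] k = b" using xG bG by (simp add: n_def m_assoc)
  ultimately have "b \<in> generate G S" by simp
  moreover have "N \<inter> H \<subseteq> generate G S" by (auto simp: S_def generate.incl)
  ultimately show ?thesis
    using comm_group_if_generate_contains_coset_powers[OF N H S comm b] powers by blast
qed

lemma (in group) metacyclic_prime_power_centralizer_subset:
  assumes p: "Factorial_Ring.prime p" and fin: "finite (carrier G)" and ord: "order G = p ^ n"
    and mc: "metacyclic G" and H: "subgroup H G" and nonabelian: "\<not> comm_group (G\<lparr>carrier := H\<rparr>)"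
  shows "centralizer G H \<subseteq> H"
proof
  obtain N where N: "N \<lhd> G"
    and commN: "\<And>u v. u \<in> N \<Longrightarrow> v \<in> N \<Longrightarrow> u \<otimes> v = v \<otimes> u"
    and chainN: "\<And>u v. u \<in> N \<Longrightarrow> v \<in> N \<Longrightarrow> (\<exists>k::int. u = v [^] k) \<or> (\<exists>k::int. v = u [^] k)"
    and chainQ: "\<And>u v. u \<in> carrier G \<Longrightarrow> v \<in> carrier G \<Longrightarrow>
           (\<exists>k::int. N #> u = N #> v [^] k) \<or> (\<exists>k::int. N #> v = N #> u [^] k)"
    using metacyclic_prime_power_structure[OF p ord mc] by blast
  interpret N: normal N G by (fact N)
  have HG: "H \<subseteq> carrier G" by (rule subgroup.subset[OF H])
  obtain b where b: "b \<in> H" and powers: "\<forall>h\<in>H. \<exists>k::int. N #> h = N #> b [^] k"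
    using exists_coset_power_generator[OF N finite_subset[OF HG fin] _ HG] chainQ HG
      subgroup.one_closed[OF H] by blast
  fix x assume x: "x \<in> centralizer G H"
  show "x \<in> H"
  proof (rule ccontr)
    assume "x \<notin> H"
    have "x \<in> carrier G" "b \<in> carrier G" using x b HG by (auto simp: centralizer_def)
    then have "comm_group (G\<lparr>carrier := H\<rparr>)"
      using chainQ
        comm_group_if_centralizer_coset_in_generator_powers[OF N.subgroup_axioms chainN H
          b powers x \<open>x \<notin> H\<close>]
        comm_group_if_generator_coset_in_centralizer_powers[OF N.subgroup_axioms commN H b powers x]
      by blast
    with nonabelian show False by contradiction
  qed
qed

theorem proposition6p7:
  fixes G :: "('a, 'b) monoid_scheme" and p :: nat
  assumes "Factorial_Ring.prime p"
    and "group G"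
    and "finite (carrier G)"
    and "\<exists>n. order G = p ^ n"
    and "metacyclic G"
    and "subgroup H G"
    and "\<not> comm_group (G\<lparr>carrier := H\<rparr>)"
  shows "centralizer G H \<subseteq> H"
proof -
  obtain n where "order G = p ^ n" using assms(4) by blast
  then show ?thesis
    using group.metacyclic_prime_power_centralizer_subset[OF assms(2,1,3) _ assms(5-7)] by blast
qed

end
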